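(* In the linear model setting described in the context, for every $\alpha\in[0,1]$, $$\mathcal R(\hat f_\alpha)\le\sum_{s=1}^Kw_s\mathbb E\big(\langle\boldsymbol X,\boldsymbol\beta^*-\hat{\boldsymbol\beta}\rangle+(b^*_s-\hat b_s)\big)^2+2(1-\sqrt\alpha)\sqrt{\sum_{s=1}^Kw_s(b^*_s-\hat b_s)^2}\sqrt{\sum_{s=1}^Kw_s\Big(\hat b_s-\sum_{s'}w_{s'}\hat b_{s'}\Big)^2}+(1-\sqrt\alpha)^2\sum_{s=1}^Kw_s\Big(\hat b_s-\sum_{s'}w_{s'}\hat b_{s'}\Big)^2.$$
   Context: Model: $Y=\langle\boldsymbol X,\boldsymbol\beta^*\rangle+b^*_S+\xi$, $\boldsymbol X\sim\mathcal N(\boldsymbol0,\boldsymbol\Sigma)$ with $\boldsymbol\Sigma\succ0$, independent of $S\in[K]$, $\xi\sim\mathcal N(0,\sigma^2)$ independent. Observations: for each $s$, $\boldsymbol Y_s=\mathbf X_s\boldsymbol\beta^*+b^*_s\boldsymbol1_{n_s}+\boldsymbol\xi_s$ (i.i.d. $\mathcal N(\boldsymbol0,\boldsymbol\Sigma)$ rows, i.i.d. $\mathcal N(0,\sigma^2)$ noise, all independent); $n=\sum_sn_s$, $w_s=n_s/n$. $(\hat{\boldsymbol\beta},\hat{\boldsymbol b})\in\arg\min_{(\boldsymbol\beta,\boldsymbol b)}\sum_sw_s\frac1{n_s}\|\boldsymbol Y_s-\mathbf X_s\boldsymbol\beta-b_s\boldsymbol1_{n_s}\|_2^2$; $\hat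 f_\alpha(\boldsymbol x,s)=\langle\boldsymbol x,\hat{\boldsymbol\beta}\rangle+\sqrt\alpha\hat b_s+(1-\sqrt\alpha)\sum_{s'}w_{s'}\hat b_{s'}$. Risk (sample fixed): $\mathcal R(f)=\sum_sw_s\mathbb E(\langle\boldsymbol X,\boldsymbol\beta^*\rangle+b^*_s-f(\boldsymbol X,s))^2$ where $\mathbb E$ is over $\boldsymbol X\sim\mathcal N(\boldsymbol0,\boldsymbol\Sigma)$ independent of the sample. *)

theory Defs
  imports "HOL-Probability.Probability"
begin

text \<open>Centered multivariate Gaussian law on real^'d with covariance matrix Sigma,
  in the Cramer--Wold sense: every non-trivial linear functional u . X is
  distributed as N(0, u^T Sigma u).\<close>

definition centered_gaussian :: "(real^'d) measure \<Rightarrow> real^'d^'d \<Rightarrow> bool" where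
  "centered_gaussian M Sig \<longleftrightarrow>
     prob_space M \<and> sets M = sets borel \<and>
     (\<forall>u::real^'d. u \<noteq> 0 \<longrightarrow>
        distr M borel (\<lambda>x. u \<bullet> x) = density lborel (normal_density 0 (sqrt (u \<bullet> (Sig *v u)))))"

definition pos_def_mat :: "real^'d^'d \<Rightarrow> bool" where
  "pos_def_mat Sig \<longleftrightarrow> transpose Sig = Sig \<and> (\<forall>u::real^'d. u \<noteq> 0 \<longrightarrow> u \<bullet> (Sig *v u) > 0)"

text \<open>Groups are s = 1..K; group s has n s observations (xs s i, ys s i), i < n s.\<close>
definition weight :: "nat \<Rightarrow> (nat \<Rightarrow> nat) \<Rightarrow> nat \<Rightarrow> real" where
  "weight K n s = real (n s) / real (\<Sum>s'\<in>{1..K}. n s')"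

definition emp_obj :: "nat \<Rightarrow> (nat \<Rightarrow> nat) \<Rightarrow> (nat \<Rightarrow> nat \<Rightarrow> real^'d) \<Rightarrow> (nat \<Rightarrow> nat \<Rightarrow> real)
                       \<Rightarrow> real^'d \<Rightarrow> (nat \<Rightarrow> real) \<Rightarrow> real" where
  "emp_obj K n xs ys \<beta> b =
     (\<Sum>s\<in>{1..K}. weight K n s * (1 / real (n s)) *
        (\<Sum>i<n s. (ys s i - xs s i \<bullet> \<beta> - b s)\<^sup>2))"

definition f_alpha :: "nat \<Rightarrow> (nat \<Rightarrow> nat) \<Rightarrow> real \<Rightarrow> real^'d \<Rightarrow> (nat \<Rightarrow> real) \<Rightarrow> real^'d \<Rightarrow> nat \<Rightarrow> real" where
  "f_alpha K n \<alpha> \<beta>h bh x s =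
     x \<bullet> \<beta>h + sqrt \<alpha> * bh s + (1 - sqrt \<alpha>) * (\<Sum>s'\<in>{1..K}. weight K n s' * bh s')"

definition risk :: "(real^'d) measure \<Rightarrow> nat \<Rightarrow> (nat \<Rightarrow> nat) \<Rightarrow> real^'d \<Rightarrow> (nat \<Rightarrow> real)
                    \<Rightarrow> (real^'d \<Rightarrow> nat \<Rightarrow> real) \<Rightarrow> real" where
  "risk M K n \<beta>s bs f =
     (\<Sum>s\<in>{1..K}. weight K n s * (\<integral>x. (x \<bullet> \<beta>s + bs s - f x s)\<^sup>2 \<partial>M))"

end

theory Submission
  imports Defs
begin

(* Because X is centred, the error of f_alpha in group s has second moment
   E <X, beta* - beta_hat>^2 + (e_s + (1 - sqrt alpha) v_s)^2, where e_s = b*_s - b_hat_s and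
   v_s = b_hat_s - sum_s' w_s' b_hat_s'.  Expanding the square and bounding the weighted cross term
   sum_s w_s e_s v_s by Cauchy-Schwarz gives the bound. *)

lemma centered_gaussian_distributed_inner:
  fixes M :: "(real^'d) measure" and Sig :: "real^'d^'d" and u :: "real^'d"
  assumes "pos_def_mat Sig" and "centered_gaussian M Sig" and "u \<noteq> 0"
  shows "distributed M lborel (\<lambda>x. x \<bullet> u) (normal_density 0 (sqrt (u \<bullet> (Sig *v u))))"
proof -
  have sets_M: "sets M = sets borel"
    using assms(2) unfolding centered_gaussian_def by auto
  have "(\<lambda>x::real^'d. x \<bullet> u) \<in> borel_measurable borel"
    by (intro borel_measurable_continuous_onI continuous_intros)
  then have "(\<lambda>x. x \<bullet> u) \<in> borel_measurable M"
    unfolding measurable_cong_sets[OF sets_M refl] .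
  moreover have "distr M lborel (\<lambda>x. x \<bullet> u) = distr M borel (\<lambda>x. u \<bullet> x)"
    by (rule distr_cong) (auto simp: inner_commute)
  ultimately show ?thesis
    using assms(2,3) unfolding distributed_def centered_gaussian_def by simp
qed

lemma centered_gaussian_inner_moments:
  fixes M :: "(real^'d) measure" and Sig :: "real^'d^'d" and u :: "real^'d"
  assumes "pos_def_mat Sig" and "centered_gaussian M Sig"
  shows "integrable M (\<lambda>x. x \<bullet> u)" and "(\<integral>x. x \<bullet> u \<partial>M) = 0"
    and "integrable M (\<lambda>x. (x \<bullet> u)\<^sup>2)"
proof -
  interpret prob_space M
    using assms(2) unfolding centered_gaussian_def by auto
  have "integrable M (\<lambda>x. x \<bullet> u) \<and> (\<integral>x. x \<bullet> u \<partial>M) = 0 \<and> integrable M (\<lambda>x. (x \<bullet> u)\<^sup>2)"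
  proof (cases "u = 0")
    case False
    define \<sigma> where "\<sigma> = sqrt (u \<bullet> (Sig *v u))"
    have "\<sigma> > 0"
      using assms(1) False unfolding pos_def_mat_def \<sigma>_def by auto
    moreover have D: "distributed M lborel (\<lambda>x. x \<bullet> u) (normal_density 0 \<sigma>)"
      unfolding \<sigma>_def by (rule centered_gaussian_distributed_inner[OF assms False])
    ultimately show ?thesis
      using distributed_integrable[OF D, of "\<lambda>x. x"] integrable_normal_moment_nz_1[of \<sigma> 0]
        distributed_integrable[OF D, of "\<lambda>x. x\<^sup>2"] integrable_normal_moment[of \<sigma> 0 2]
        normal_distributed_expectation[of \<sigma> "\<lambda>x. x \<bullet> u" 0]
      by (simp add: normal_density_nonneg)
  qed simp
  then show "integrable M (\<lambda>x. x \<bullet> u)" and "(\<integral>x. x \<bullet> u \<partial>M) = 0"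
    and "integrable M (\<lambda>x. (x \<bullet> u)\<^sup>2)" by auto
qed

lemma (in prob_space) expectation_add_const_square:
  fixes Z :: "'a \<Rightarrow> real"
  assumes "integrable M Z" and "expectation Z = 0" and "integrable M (\<lambda>x. (Z x)\<^sup>2)"
  shows "expectation (\<lambda>x. (Z x + a)\<^sup>2) = expectation (\<lambda>x. (Z x)\<^sup>2) + a\<^sup>2"
proof -
  have "expectation (\<lambda>x. (Z x + a)\<^sup>2) = expectation (\<lambda>x. ((Z x)\<^sup>2 + 2 * a * Z x) + a\<^sup>2)"
    by (simp add: power2_eq_square algebra_simps)
  also have "\<dots> = expectation (\<lambda>x. (Z x)\<^sup>2) + 2 * a * expectation Z + a\<^sup>2"
    using assms(1,3) by (simp add: prob_space)
  finally show ?thesis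
    using assms(2) by simp
qed

lemma centered_gaussian_integral_inner_add_square:
  fixes M :: "(real^'d) measure" and Sig :: "real^'d^'d" and u :: "real^'d"
  assumes "pos_def_mat Sig" and "centered_gaussian M Sig"
  shows "(\<integral>x. (x \<bullet> u + a)\<^sup>2 \<partial>M) = (\<integral>x. (x \<bullet> u)\<^sup>2 \<partial>M) + a\<^sup>2"
proof -
  interpret prob_space M
    using assms(2) unfolding centered_gaussian_def by auto
  show ?thesis
    by (rule expectation_add_const_square) (use centered_gaussian_inner_moments[OF assms] in auto)
qed

lemma weighted_sum_Cauchy_Schwarz:
  fixes w e v :: "'a \<Rightarrow> real"
  assumes "\<And>s. s \<in> A \<Longrightarrow> w s \<ge> 0"
  shows "(\<Sum>s\<in>A. w s * e s * v s) \<le> sqrt (\<Sum>s\<in>A. w s * (e s)\<^sup>2) * sqrt (\<Sum>s\<in>A. w s * (v s)\<^sup>2)"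
proof -
  have "(\<Sum>s\<in>A. (sqrt (w s) * e s) * (sqrt (w s) * v s))\<^sup>2
     \<le> (\<Sum>s\<in>A. (sqrt (w s) * e s)\<^sup>2) * (\<Sum>s\<in>A. (sqrt (w s) * v s)\<^sup>2)"
    by (rule Cauchy_Schwarz_ineq_sum)
  also have "(\<Sum>s\<in>A. (sqrt (w s) * e s) * (sqrt (w s) * v s)) = (\<Sum>s\<in>A. w s * e s * v s)"
    using assms by (intro sum.cong) (auto simp: algebra_simps)
  also have "(\<Sum>s\<in>A. (sqrt (w s) * e s)\<^sup>2) = (\<Sum>s\<in>A. w s * (e s)\<^sup>2)"
    using assms by (intro sum.cong) (auto simp: power_mult_distrib)
  also have "(\<Sum>s\<in>A. (sqrt (w s) * v s)\<^sup>2) = (\<Sum>s\<in>A. w s * (v s)\<^sup>2)"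
    using assms by (intro sum.cong) (auto simp: power_mult_distrib)
  finally show ?thesis
    by (metis real_le_rsqrt real_sqrt_mult)
qed

lemma weighted_sum_square_add_le:
  fixes w e v :: "'a \<Rightarrow> real"
  assumes "\<And>s. s \<in> A \<Longrightarrow> w s \<ge> 0" and "c \<ge> 0"
  shows "(\<Sum>s\<in>A. w s * (e s + c * v s)\<^sup>2)
    \<le> (\<Sum>s\<in>A. w s * (e s)\<^sup>2)
      + 2 * c * sqrt (\<Sum>s\<in>A. w s * (e s)\<^sup>2) * sqrt (\<Sum>s\<in>A. w s * (v s)\<^sup>2)
      + c\<^sup>2 * (\<Sum>s\<in>A. w s * (v s)\<^sup>2)"
proof -
  have "(\<Sum>s\<in>A. w s * (e s + c * v s)\<^sup>2)
      = (\<Sum>s\<in>A. w s * (e s)\<^sup>2) + 2 * c * (\<Sum>s\<in>A. w s * e s * v s) + c\<^sup>2 * (\<Sum>s\<in>A. w s * (v s)\<^sup>2)"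
    by (simp add: sum_distrib_left sum.distrib[symmetric] power2_eq_square algebra_simps)
  moreover have "2 * c * (\<Sum>s\<in>A. w s * e s * v s)
      \<le> 2 * c * (sqrt (\<Sum>s\<in>A. w s * (e s)\<^sup>2) * sqrt (\<Sum>s\<in>A. w s * (v s)\<^sup>2))"
    using weighted_sum_Cauchy_Schwarz[of A w e v, OF assms(1)] assms(2) by (simp add: mult_left_mono)
  ultimately show ?thesis
    by (simp add: mult.assoc)
qed

theorem lemma15:
  fixes M :: "(real^'d) measure" and Sig :: "real^'d^'d"
    and K :: nat and n :: "nat \<Rightarrow> nat"
    and xs :: "nat \<Rightarrow> nat \<Rightarrow> real^'d" and ys :: "nat \<Rightarrow> nat \<Rightarrow> real"
    and \<beta>s \<beta>h :: "real^'d" and bs bh :: "nat \<Rightarrow> real" and \<alpha> :: real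
  assumes "pos_def_mat Sig"
    and "centered_gaussian M Sig"
    and "K \<ge> 1"
    and "\<forall>s\<in>{1..K}. n s \<ge> 1"
    and "\<forall>\<beta> b. emp_obj K n xs ys \<beta>h bh \<le> emp_obj K n xs ys \<beta> b"
    and "0 \<le> \<alpha>" and "\<alpha> \<le> 1"
  shows "risk M K n \<beta>s bs (f_alpha K n \<alpha> \<beta>h bh)
    \<le> (\<Sum>s\<in>{1..K}. weight K n s * (\<integral>x. (x \<bullet> (\<beta>s - \<beta>h) + (bs s - bh s))\<^sup>2 \<partial>M))
      + 2 * (1 - sqrt \<alpha>) * sqrt (\<Sum>s\<in>{1..K}. weight K n s * (bs s - bh s)\<^sup>2)
          * sqrt (\<Sum>s\<in>{1..K}. weight K n s * (bh s - (\<Sum>s'\<in>{1..K}. weight K n s' * bh s'))\<^sup>2)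
      + (1 - sqrt \<alpha>)\<^sup>2 * (\<Sum>s\<in>{1..K}. weight K n s * (bh s - (\<Sum>s'\<in>{1..K}. weight K n s' * bh s'))\<^sup>2)"
proof -
  define w where "w = weight K n"
  define m where "m = (\<Sum>s'\<in>{1..K}. w s' * bh s')"
  define c where "c = 1 - sqrt \<alpha>"
  define V where "V = (\<integral>x. (x \<bullet> (\<beta>s - \<beta>h))\<^sup>2 \<partial>M)"
  have weights_nonneg: "\<And>s. w s \<ge> 0"
    unfolding w_def weight_def by (simp add: sum_nonneg)
  have c_nonneg: "c \<ge> 0"
    unfolding c_def using assms(6,7) by simp
  note shift = centered_gaussian_integral_inner_add_square[OF assms(1,2), of "\<beta>s - \<beta>h"]
  have error_eq: "\<And>x s. x \<bullet> \<beta>s + bs s - f_alpha K n \<alpha> \<beta>h bh x s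
      = x \<bullet> (\<beta>s - \<beta>h) + (bs s - bh s + c * (bh s - m))"
    unfolding f_alpha_def c_def m_def w_def by (simp add: inner_diff_right algebra_simps)
  have "risk M K n \<beta>s bs (f_alpha K n \<alpha> \<beta>h bh)
      = (\<Sum>s\<in>{1..K}. w s * (V + (bs s - bh s + c * (bh s - m))\<^sup>2))"
    unfolding risk_def V_def w_def by (simp only: error_eq shift)
  also have "\<dots> = (\<Sum>s\<in>{1..K}. w s) * V + (\<Sum>s\<in>{1..K}. w s * (bs s - bh s + c * (bh s - m))\<^sup>2)"
    by (simp add: distrib_left sum.distrib sum_distrib_right)
  also have "\<dots> \<le> (\<Sum>s\<in>{1..K}. w s) * V + (\<Sum>s\<in>{1..K}. w s * (bs s - bh s)\<^sup>2)
      + 2 * c * sqrt (\<Sum>s\<in>{1..K}. w s * (bs s - bh s)\<^sup>2) * sqrt (\<Sum>s\<in>{1..K}. w s * (bh s - m)\<^sup>2)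
      + c\<^sup>2 * (\<Sum>s\<in>{1..K}. w s * (bh s - m)\<^sup>2)"
    using weighted_sum_square_add_le[of "{1..K}" w c "\<lambda>s. bs s - bh s" "\<lambda>s. bh s - m"]
      weights_nonneg c_nonneg by simp
  also have "(\<Sum>s\<in>{1..K}. w s) * V + (\<Sum>s\<in>{1..K}. w s * (bs s - bh s)\<^sup>2)
      = (\<Sum>s\<in>{1..K}. w s * (\<integral>x. (x \<bullet> (\<beta>s - \<beta>h) + (bs s - bh s))\<^sup>2 \<partial>M))"
    unfolding shift V_def by (simp add: distrib_left sum.distrib sum_distrib_right)
  finally show ?thesis
    unfolding w_def m_def c_def .
qed

end
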